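(* Let $G$ be an antimatroid on a ground set $S$ with $|S|=n$, and for $i,j\ge0$ let $a_{i,j}$ be the number of convex sets $C$ of $G$ with $|C|=i$ and $|\mathrm{int}(C)|=j$. Then: (1) for every integer $0\le k<n$, $$\sum_{i=0}^{k}\sum_{j=0}^{k-i}(-1)^j\binom{k-i}{j}\sum_{s=i}^{n}(-1)^{s-i}\binom{s}{i}a_{s,j}=0;$$ (2) for $k=n$, $$\sum_{i=0}^{n}\sum_{j=0}^{n-i}(-1)^j\binom{n-i}{j}\sum_{s=i}^{n}(-1)^{s-i}\binom{s}{i}a_{s,j}=1.$$
   Context: An antimatroid on a finite set $S$ is a family $\mathcal{F}\subseteq 2^S$ of feasible sets with $\emptyset\in\mathcal{F}$, $S\in\mathcal{F}$, closed under union, and accessible: every nonempty $F\in\mathcal{F}$ contains some $x$ with $F\setminus\{x\}\in\mathcal{F}$. A set $C$ is convex if $S\setminus C\in\mathcal{F}$; convex sets are closed under intersection, and the convex closure $\overline{A}$ of $A$ is the smallest convex set containing $A$. For convex $C$, $p\in C$ is extreme if $p\notin\overline{C\setminus\{p\}}$; $\mathrm{int}(C)$ is the set of non-extreme points of $C$. *)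

theory Defs
  imports Main
begin

definition antimatroid :: "'a set \<Rightarrow> 'a set set \<Rightarrow> bool" where
  "antimatroid S F \<longleftrightarrow> finite S \<and> F \<subseteq> Pow S \<and> {} \<in> F \<and> S \<in> F \<and>
     (\<forall>A\<in>F. \<forall>B\<in>F. A \<union> B \<in> F) \<and>
     (\<forall>A\<in>F. A \<noteq> {} \<longrightarrow> (\<exists>x\<in>A. A - {x} \<in> F))"

definition convex_set :: "'a set \<Rightarrow> 'a set set \<Rightarrow> 'a set \<Rightarrow> bool" where
  "convex_set S F C \<longleftrightarrow> C \<subseteq> S \<and> S - C \<in> F"

definition conv_closure :: "'a set \<Rightarrow> 'a set set \<Rightarrow> 'a set \<Rightarrow> 'a set" where
  "conv_closure S F A = \<Inter>{C. convex_set S F C \<and> A \<subseteq> C}"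

definition extreme_pt :: "'a set \<Rightarrow> 'a set set \<Rightarrow> 'a set \<Rightarrow> 'a \<Rightarrow> bool" where
  "extreme_pt S F C p \<longleftrightarrow> p \<in> C \<and> p \<notin> conv_closure S F (C - {p})"

definition interior_pts :: "'a set \<Rightarrow> 'a set set \<Rightarrow> 'a set \<Rightarrow> 'a set" where
  "interior_pts S F C = {p \<in> C. \<not> extreme_pt S F C p}"

definition a_count :: "'a set \<Rightarrow> 'a set set \<Rightarrow> nat \<Rightarrow> nat \<Rightarrow> nat" where
  "a_count S F i j = card {C. convex_set S F C \<and> card C = i \<and> card (interior_pts S F C) = j}"

end

theory Submission
  imports Defs
begin

text \<open>For A \<subseteq> S let w_k(A) = \<Sum>{(-1)^(|A| - |B|) | B \<subseteq> A, |B| \<le> k} (truncated_sign_sum). By inclusion--exclusion,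
  the sum of w_k over all subsets of S is 1 if n \<le> k and 0 otherwise. Now group the subsets
  of S by their convex closure: the sets with closure C are exactly those between the extreme
  points ex(C) and C, because C is the closure of ex(C) (an antimatroid Krein--Milman theorem).
  The sum of w_k over such an interval depends only on |ex(C)| and |int(C)|, and a binomial
  computation identifies it with the contribution of C to the double sum over the a_{i,j}.\<close>

definition alt_binom_conv :: "nat \<Rightarrow> nat \<Rightarrow> nat \<Rightarrow> int" where
  "alt_binom_conv s j k = (\<Sum>i=0..k. (-1)^i * int (s choose i) * int ((k - i) choose j))"

lemma alt_binom_conv_Suc_Suc_left:
  "alt_binom_conv (Suc s) j (Suc k) = alt_binom_conv s j (Suc k) - alt_binom_conv s j k"
proof -
  let ?t = "\<lambda>m i. (-1::int)^Suc i * int (m choose Suc i) * int ((k - i) choose j)"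
  have shift: "alt_binom_conv m j (Suc k) = int (Suc k choose j) + (\<Sum>i=0..k. ?t m i)" for m
    unfolding alt_binom_conv_def by (subst sum.atLeast0_atMost_Suc_shift) simp
  have "(\<Sum>i=0..k. ?t (Suc s) i) = (\<Sum>i=0..k. ?t s i - (-1)^i * int (s choose i) * int ((k - i) choose j))"
    by (rule sum.cong) (simp_all add: algebra_simps)
  then have "(\<Sum>i=0..k. ?t (Suc s) i) = (\<Sum>i=0..k. ?t s i) - alt_binom_conv s j k"
    unfolding alt_binom_conv_def by (simp add: sum_subtractf)
  then show ?thesis using shift[of s] shift[of "Suc s"] by simp
qed

lemma alt_binom_conv_Suc_Suc_right:
  "alt_binom_conv s (Suc j) (Suc k) = alt_binom_conv s j k + alt_binom_conv s (Suc j) k"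
  unfolding alt_binom_conv_def
  by (simp add: sum.distrib Suc_diff_le algebra_simps)

lemma alt_binom_conv_Suc_Suc_Suc:
  "alt_binom_conv (Suc s) (Suc j) (Suc k) = alt_binom_conv s j k"
  using alt_binom_conv_Suc_Suc_left[of s "Suc j" k] alt_binom_conv_Suc_Suc_right[of s j k] by simp

definition partial_alt_binom :: "nat \<Rightarrow> nat \<Rightarrow> nat \<Rightarrow> int" where
  "partial_alt_binom e j k = (\<Sum>r\<in>{r. r \<le> e \<and> r + j \<le> k}. (-1)^(e - r) * int (e choose r))"

lemma partial_alt_binom_0: "partial_alt_binom 0 j k = (if j \<le> k then 1 else 0)"
proof -
  have "{r. r \<le> 0 \<and> r + j \<le> k} = (if j \<le> k then {0} else {})" by auto
  then show ?thesis by (simp add: partial_alt_binom_def)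
qed

lemma alt_binom_conv_eq_partial_alt_binom:
  "(-1)^e * alt_binom_conv (e + j) j k = partial_alt_binom e j k"
proof (induction j arbitrary: k)
  case 0
  have "(-1)^e * alt_binom_conv e 0 k = (\<Sum>i\<in>{0..k}. if i \<le> e then (-1)^(e - i) * int (e choose i) else 0)"
    unfolding alt_binom_conv_def sum_distrib_left
    by (rule sum.cong) (auto simp: minus_one_power_iff)
  also have "\<dots> = partial_alt_binom e 0 k"
    unfolding partial_alt_binom_def sum.inter_filter[OF finite_atLeastAtMost, symmetric]
    by (rule sum.cong) auto
  finally show ?case by simp
next
  case (Suc j)
  show ?case
  proof (cases k)
    case 0
    then show ?thesis by (simp add: alt_binom_conv_def partial_alt_binom_def)
  next
    case (Suc k')
    have "partial_alt_binom e (Suc j) (Suc k') = partial_alt_binom e j k'"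
      unfolding partial_alt_binom_def by simp
    then show ?thesis using Suc.IH[of k'] Suc by (simp add: alt_binom_conv_Suc_Suc_Suc)
  qed
qed

lemma sum_alt_binom_product:
  "(\<Sum>i=0..k. (-1::int)^j * int ((k - i) choose j) * ((-1)^(e + j - i) * int ((e + j) choose i)))
     = partial_alt_binom e j k"
proof -
  have termwise: "(-1::int)^j * int ((k - i) choose j) * ((-1)^(e + j - i) * int ((e + j) choose i))
      = (-1)^e * ((-1)^i * int ((e + j) choose i) * int ((k - i) choose j))" for i
    by (cases "i \<le> e + j") (auto simp: minus_one_power_iff)
  show ?thesis
    unfolding termwise sum_distrib_left[symmetric] alt_binom_conv_def[symmetric]
    by (rule alt_binom_conv_eq_partial_alt_binom)
qed

lemma sum_neg_one_power_card_interval: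
  assumes "finite Y" "X \<subseteq> Y"
  shows "(\<Sum>T | X \<subseteq> T \<and> T \<subseteq> Y. (-1::int) ^ card T) = (if X = Y then (-1) ^ card Y else 0)"
proof (cases "X = Y")
  case True
  then have "{T. X \<subseteq> T \<and> T \<subseteq> Y} = {Y}" by auto
  then show ?thesis using True by simp
next
  case False
  then have "X \<subset> Y" using assms(2) by auto
  have "(\<Sum>T | T \<subseteq> Y \<and> X \<subseteq> T. (-1::int) ^ card T) = 0"
    using card_subsupersets_even_odd[OF assms(1) \<open>X \<subset> Y\<close>] assms(1)
    by (intro sum_alternating_cancels) simp_all
  then show ?thesis using False by (simp add: conj_commute)
qed

definition truncated_sign_sum :: "nat \<Rightarrow> 'a set \<Rightarrow> int" where
  "truncated_sign_sum k A = (\<Sum>B | B \<subseteq> A \<and> card B \<le> k. (-1)^card B * (-1)^card A)"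

lemma sum_truncated_sign_sum_interval_covers:
  assumes fin: "finite Y" and XY: "X \<subseteq> Y"
  shows "(\<Sum>A | X \<subseteq> A \<and> A \<subseteq> Y. truncated_sign_sum k A)
       = (\<Sum>B | B \<subseteq> Y \<and> card B \<le> k \<and> X \<union> B = Y. (-1)^card B * (-1)^card Y)"
proof -
  let ?I = "{A. X \<subseteq> A \<and> A \<subseteq> Y}"
  let ?Sm = "{B. B \<subseteq> Y \<and> card B \<le> k}"
  have finI: "finite ?I" and finSm: "finite ?Sm"
    using fin by (auto intro: finite_subset[of _ "Pow Y"])
  have "(\<Sum>A\<in>?I. truncated_sign_sum k A)
      = (\<Sum>A\<in>?I. \<Sum>B | B \<in> ?Sm \<and> B \<subseteq> A. (-1::int)^card B * (-1)^card A)"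
    unfolding truncated_sign_sum_def by (intro sum.cong refl arg_cong[where f="\<lambda>M. sum _ M"]) auto
  also have "\<dots> = (\<Sum>B\<in>?Sm. \<Sum>A | A \<in> ?I \<and> B \<subseteq> A. (-1::int)^card B * (-1)^card A)"
    by (rule sum.swap_restrict[OF finI finSm])
  also have "\<dots> = (\<Sum>B\<in>?Sm. (-1)^card B * (\<Sum>A | X \<union> B \<subseteq> A \<and> A \<subseteq> Y. (-1::int)^card A))"
    by (intro sum.cong refl) (auto simp: sum_distrib_left intro!: arg_cong[where f="\<lambda>M. sum _ M"])
  also have "\<dots> = (\<Sum>B\<in>?Sm. if X \<union> B = Y then (-1)^card B * (-1)^card Y else 0)"
  proof (intro sum.cong refl)
    fix B assume "B \<in> ?Sm"
    then have "X \<union> B \<subseteq> Y" using XY by auto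
    from sum_neg_one_power_card_interval[OF fin this]
    show "(-1)^card B * (\<Sum>A | X \<union> B \<subseteq> A \<and> A \<subseteq> Y. (-1::int)^card A)
        = (if X \<union> B = Y then (-1)^card B * (-1)^card Y else 0)" by simp
  qed
  also have "\<dots> = (\<Sum>B | B \<in> ?Sm \<and> X \<union> B = Y. (-1)^card B * (-1)^card Y)"
    by (rule sum.inter_filter[OF finSm, symmetric])
  finally show ?thesis by simp
qed

lemma sum_truncated_sign_sum_interval:
  assumes fin: "finite Y" and XY: "X \<subseteq> Y"
  shows "(\<Sum>A | X \<subseteq> A \<and> A \<subseteq> Y. truncated_sign_sum k A) = partial_alt_binom (card X) (card (Y - X)) k"
proof -
  let ?I = "Y - X"
  let ?P = "{B'. B' \<subseteq> X \<and> card B' + card ?I \<le> k}"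
  have finX: "finite X" and finP: "finite ?P"
    using fin XY by (auto intro: finite_subset[of _ "Pow X"] finite_subset)
  have card_Un: "card (?I \<union> B') = card ?I + card B'" if "B' \<subseteq> X" for B'
    using that fin finX by (intro card_Un_disjoint) (auto intro: finite_subset)
  have card_Y: "card Y = card X + card ?I"
    using card_Un[of X] XY by (simp add: Un_absorb2)
  have "(\<Sum>A | X \<subseteq> A \<and> A \<subseteq> Y. truncated_sign_sum k A)
      = (\<Sum>B | B \<subseteq> Y \<and> card B \<le> k \<and> X \<union> B = Y. (-1)^card B * (-1)^card Y)"
    by (rule sum_truncated_sign_sum_interval_covers[OF fin XY])
  also have "\<dots> = (\<Sum>B'\<in>?P. (-1)^card (?I \<union> B') * (-1)^card Y)"
  proof (rule sum.reindex_bij_witness[of _ "\<lambda>B'. ?I \<union> B'" "\<lambda>B. B \<inter> X"])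
    fix B assume B: "B \<in> {B. B \<subseteq> Y \<and> card B \<le> k \<and> X \<union> B = Y}"
    then have "B = ?I \<union> (B \<inter> X)" by blast
    then show "?I \<union> (B \<inter> X) = B" and "B \<inter> X \<in> ?P"
      using B card_Un[of "B \<inter> X"] by auto
  next
    fix B' assume B': "B' \<in> ?P"
    then show "(?I \<union> B') \<inter> X = B'" and "?I \<union> B' \<in> {B. B \<subseteq> Y \<and> card B \<le> k \<and> X \<union> B = Y}"
      using XY card_Un[of B'] by auto
  next
    fix B assume "B \<in> {B. B \<subseteq> Y \<and> card B \<le> k \<and> X \<union> B = Y}"
    then have "?I \<union> (B \<inter> X) = B" by blast
    then show "(-1::int)^card (?I \<union> (B \<inter> X)) * (-1)^card Y = (-1)^card B * (-1)^card Y" by simp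
  qed
  also have "\<dots> = (\<Sum>B'\<in>?P. (-1)^(card X - card B'))"
  proof (intro sum.cong refl)
    fix B' assume "B' \<in> ?P"
    then have "B' \<subseteq> X" "card B' \<le> card X" using finX by (auto intro: card_mono)
    then show "(-1::int)^card (?I \<union> B') * (-1)^card Y = (-1)^(card X - card B')"
      by (auto simp: card_Un card_Y minus_one_power_iff)
  qed
  also have "\<dots> = (\<Sum>r | r \<le> card X \<and> r + card ?I \<le> k. \<Sum>B' | B' \<in> ?P \<and> card B' = r. (-1::int)^(card X - card B'))"
    using finX by (intro sum.group[symmetric] finP) (auto intro: card_mono)
  also have "\<dots> = partial_alt_binom (card X) (card ?I) k"
    unfolding partial_alt_binom_def
  proof (intro sum.cong refl)
    fix r assume r: "r \<in> {r. r \<le> card X \<and> r + card ?I \<le> k}"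
    then have "{B'. B' \<in> ?P \<and> card B' = r} = {B'. B' \<subseteq> X \<and> card B' = r}" by auto
    then show "(\<Sum>B' | B' \<in> ?P \<and> card B' = r. (-1::int)^(card X - card B')) = (-1)^(card X - r) * int (card X choose r)"
      using n_subsets[OF finX, of r] by simp
  qed
  finally show ?thesis .
qed

lemma sum_weighted_fibres:
  fixes w :: "'b \<Rightarrow> 'r::semiring_0"
  assumes "finite T"
  shows "(\<Sum>t\<in>T. w t * (\<Sum>x\<in>X. if f x = t then g x else 0))
       = (\<Sum>x\<in>X. if f x \<in> T then w (f x) * g x else 0)"
proof -
  have "(\<Sum>t\<in>T. w t * (\<Sum>x\<in>X. if f x = t then g x else 0))
      = (\<Sum>x\<in>X. \<Sum>t\<in>T. if f x = t then w (f x) * g x else 0)"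
    by (subst sum.swap) (auto simp: sum_distrib_left intro!: sum.cong)
  then show ?thesis using assms by simp
qed

lemma antimatroid_Union_feasible:
  assumes "antimatroid S F" "finite G" "G \<subseteq> F"
  shows "\<Union>G \<in> F"
  using assms(2,3)
proof (induction G rule: finite_induct)
  case empty
  then show ?case using assms(1) by (simp add: antimatroid_def)
next
  case (insert x G)
  then show ?case using assms(1) unfolding antimatroid_def by auto
qed

lemma antimatroid_augmentation:
  assumes am: "antimatroid S F" and X: "X \<in> F"
  shows "Y \<in> F \<Longrightarrow> \<not> Y \<subseteq> X \<Longrightarrow> \<exists>x\<in>Y - X. X \<union> {x} \<in> F"
proof (induction "card Y" arbitrary: Y rule: less_induct)
  case (less Y)
  have "finite Y"
    using am less.prems(1) unfolding antimatroid_def by (meson Pow_iff finite_subset subsetD)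
  obtain y where y: "y \<in> Y" "Y - {y} \<in> F"
    using am less.prems unfolding antimatroid_def by blast
  show ?case
  proof (cases "Y - {y} \<subseteq> X")
    case True
    then have "y \<notin> X" "X \<union> {y} = X \<union> Y" using less.prems(2) y by auto
    moreover have "X \<union> Y \<in> F" using am X less.prems(1) unfolding antimatroid_def by blast
    ultimately show ?thesis using y by (intro bexI[of _ y]) auto
  next
    case False
    have "card (Y - {y}) < card Y" using \<open>finite Y\<close> y by (meson card_Diff1_less)
    from less.hyps[OF this y(2) False] show ?thesis by auto
  qed
qed

lemma conv_closure_superset: "A \<subseteq> conv_closure S F A"
  unfolding conv_closure_def by blast

lemma conv_closure_least: "convex_set S F C \<Longrightarrow> A \<subseteq> C \<Longrightarrow> conv_closure S F A \<subseteq> C"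
  unfolding conv_closure_def by blast

lemma conv_closure_mono: "A \<subseteq> B \<Longrightarrow> conv_closure S F A \<subseteq> conv_closure S F B"
  unfolding conv_closure_def by blast

lemma extreme_pt_conv_closure:
  assumes "extreme_pt S F (conv_closure S F A) p"
  shows "p \<in> A"
proof (rule ccontr)
  assume "p \<notin> A"
  then have "A \<subseteq> conv_closure S F A - {p}" using conv_closure_superset[of A] by blast
  then have "conv_closure S F A \<subseteq> conv_closure S F (conv_closure S F A - {p})"
    by (rule conv_closure_mono)
  then show False using assms unfolding extreme_pt_def by blast
qed

context
  fixes S :: "'a set" and F :: "'a set set"
  assumes am: "antimatroid S F"
begin

lemma finite_ground: "finite S"
  using am by (simp add: antimatroid_def)

lemma convex_set_ground: "convex_set S F S"
  using am by (simp add: antimatroid_def convex_set_def)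

lemma convex_conv_closure:
  assumes "A \<subseteq> S"
  shows "convex_set S F (conv_closure S F A)"
proof -
  let ?G = "{C. convex_set S F C \<and> A \<subseteq> C}"
  have "S \<in> ?G" using convex_set_ground assms by auto
  have "?G \<subseteq> Pow S" unfolding convex_set_def by auto
  then have "finite ((\<lambda>C. S - C) ` ?G)"
    using finite_ground by (meson finite_Pow_iff finite_imageI finite_subset)
  moreover have "(\<lambda>C. S - C) ` ?G \<subseteq> F" unfolding convex_set_def by auto
  ultimately have "\<Union>((\<lambda>C. S - C) ` ?G) \<in> F" by (rule antimatroid_Union_feasible[OF am])
  moreover have "\<Union>((\<lambda>C. S - C) ` ?G) = S - \<Inter>?G" using \<open>S \<in> ?G\<close> by auto
  moreover have "\<Inter>?G \<subseteq> S" using \<open>S \<in> ?G\<close> by blast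
  ultimately show ?thesis unfolding convex_set_def conv_closure_def by simp
qed

text \<open>An antimatroid analogue of the Krein--Milman theorem: a convex set is the closure of its
  extreme points. A point of C outside that closure yields, by augmenting the feasible set
  S - C, a point x with C - {x} convex, i.e.\ an extreme point outside the closure.\<close>
lemma convex_subset_conv_closure_extreme:
  assumes C: "convex_set S F C"
  shows "C \<subseteq> conv_closure S F {p\<in>C. extreme_pt S F C p}"
proof (rule ccontr)
  let ?E = "{p\<in>C. extreme_pt S F C p}"
  let ?D = "conv_closure S F ?E"
  assume "\<not> C \<subseteq> ?D"
  have CS: "C \<subseteq> S" and "S - C \<in> F" using C by (auto simp: convex_set_def)
  have "convex_set S F ?D" using CS by (intro convex_conv_closure) blast
  then have "S - ?D \<in> F" by (simp add: convex_set_def)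
  moreover have "\<not> S - ?D \<subseteq> S - C" using \<open>\<not> C \<subseteq> ?D\<close> CS by blast
  ultimately obtain x where "x \<in> (S - ?D) - (S - C)" "(S - C) \<union> {x} \<in> F"
    using antimatroid_augmentation[OF am \<open>S - C \<in> F\<close>] by blast
  then have x: "x \<in> C" "x \<notin> ?D" "(S - C) \<union> {x} \<in> F" by auto
  have "S - (C - {x}) = (S - C) \<union> {x}" using x CS by blast
  then have "convex_set S F (C - {x})" using x(3) CS unfolding convex_set_def by auto
  then have "x \<notin> conv_closure S F (C - {x})" using conv_closure_least by blast
  then have "x \<in> ?E" using x(1) by (simp add: extreme_pt_def)
  then show False using x(2) conv_closure_superset[of ?E] by blast
qed

lemma conv_closure_fibre:
  assumes C: "convex_set S F C"
  shows "{A. A \<subseteq> S \<and> conv_closure S F A = C} = {A. {p\<in>C. extreme_pt S F C p} \<subseteq> A \<and> A \<subseteq> C}"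
proof (intro set_eqI iffI)
  fix A assume "A \<in> {A. A \<subseteq> S \<and> conv_closure S F A = C}"
  then have "conv_closure S F A = C" by simp
  then show "A \<in> {A. {p\<in>C. extreme_pt S F C p} \<subseteq> A \<and> A \<subseteq> C}"
    using extreme_pt_conv_closure[of S F A] conv_closure_superset[of A] by blast
next
  fix A assume "A \<in> {A. {p\<in>C. extreme_pt S F C p} \<subseteq> A \<and> A \<subseteq> C}"
  then have A: "{p\<in>C. extreme_pt S F C p} \<subseteq> A" "A \<subseteq> C" by auto
  have "conv_closure S F A = C"
    using conv_closure_least[OF C A(2)] convex_subset_conv_closure_extreme[OF C]
      conv_closure_mono[OF A(1)] by blast
  moreover have "A \<subseteq> S" using A(2) C by (auto simp: convex_set_def)
  ultimately show "A \<in> {A. A \<subseteq> S \<and> conv_closure S F A = C}" by simp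
qed

lemma alternating_a_count_sum_eq_sum_convex:
  assumes n: "card S = n"
  shows "(\<Sum>i=0..k. \<Sum>j=0..k-i. (-1::int)^j * int ((k-i) choose j) *
              (\<Sum>s=i..n. (-1)^(s-i) * int (s choose i) * int (a_count S F s j)))
       = (\<Sum>C | convex_set S F C. \<Sum>i=0..k. (-1)^card (interior_pts S F C) *
              int ((k - i) choose card (interior_pts S F C)) * ((-1)^(card C - i) * int (card C choose i)))"
proof -
  define Conv where "Conv = {C. convex_set S F C}"
  define c where "c i s = (-1::int)^(s - i) * int (s choose i)" for i s
  define d where "d i j = (-1::int)^j * int ((k - i) choose j)" for i j
  let ?j = "\<lambda>C. card (interior_pts S F C)"
  have "Conv \<subseteq> Pow S" unfolding Conv_def convex_set_def by auto
  then have finConv: "finite Conv" and card_le: "C \<in> Conv \<Longrightarrow> card C \<le> n" for C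
    using finite_ground n by (auto intro: finite_subset card_mono)
  have a_count_eq: "int (a_count S F s j) = (\<Sum>C\<in>Conv. if card C = s then (if ?j C = j then 1 else 0) else 0)" for s j
  proof -
    have "int (a_count S F s j) = (\<Sum>C | C \<in> Conv \<and> card C = s \<and> ?j C = j. 1)"
      unfolding a_count_def Conv_def by simp
    also have "\<dots> = (\<Sum>C\<in>Conv. if card C = s \<and> ?j C = j then 1 else 0)"
      by (rule sum.inter_filter[OF finConv])
    finally show ?thesis by (simp only: if_if_eq_conj)
  qed
  have inner: "(\<Sum>s=i..n. c i s * int (a_count S F s j))
      = (\<Sum>C\<in>Conv. if ?j C = j then c i (card C) else 0)" for i j
  proof -
    have "(\<Sum>s=i..n. c i s * int (a_count S F s j))
        = (\<Sum>C\<in>Conv. if card C \<in> {i..n} then c i (card C) * (if ?j C = j then 1 else 0) else 0)"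
      unfolding a_count_eq by (rule sum_weighted_fibres) simp
    also have "\<dots> = (\<Sum>C\<in>Conv. if ?j C = j then c i (card C) else 0)"
      using card_le by (intro sum.cong refl) (auto simp: c_def)
    finally show ?thesis .
  qed
  have outer: "(\<Sum>j=0..k-i. d i j * (\<Sum>C\<in>Conv. if ?j C = j then c i (card C) else 0))
      = (\<Sum>C\<in>Conv. d i (?j C) * c i (card C))" for i
    by (subst sum_weighted_fibres) (auto simp: d_def intro!: sum.cong)
  have "(\<Sum>i=0..k. \<Sum>j=0..k-i. (-1::int)^j * int ((k-i) choose j) *
              (\<Sum>s=i..n. (-1)^(s-i) * int (s choose i) * int (a_count S F s j)))
      = (\<Sum>i=0..k. \<Sum>j=0..k-i. d i j * (\<Sum>s=i..n. c i s * int (a_count S F s j)))"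
    by (simp add: c_def d_def mult.assoc)
  also have "\<dots> = (\<Sum>i=0..k. \<Sum>C\<in>Conv. d i (?j C) * c i (card C))"
    by (simp add: inner outer)
  also have "\<dots> = (\<Sum>C\<in>Conv. \<Sum>i=0..k. d i (?j C) * c i (card C))"
    by (rule sum.swap)
  finally show ?thesis by (simp add: Conv_def c_def d_def)
qed

lemma convex_weight_eq_sum_fibre:
  assumes C: "convex_set S F C"
  shows "(\<Sum>i=0..k. (-1::int)^card (interior_pts S F C) *
              int ((k - i) choose card (interior_pts S F C)) * ((-1)^(card C - i) * int (card C choose i)))
       = (\<Sum>A | A \<subseteq> S \<and> conv_closure S F A = C. truncated_sign_sum k A)"
proof -
  let ?E = "{p\<in>C. extreme_pt S F C p}"
  have "finite C" using C finite_ground by (auto simp: convex_set_def intro: finite_subset)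
  have "C - ?E = interior_pts S F C" by (auto simp: interior_pts_def)
  moreover have "card C = card ?E + card (C - ?E)"
    using \<open>finite C\<close> by (simp add: card_Diff_subset card_mono)
  ultimately have "(\<Sum>i=0..k. (-1::int)^card (interior_pts S F C) *
              int ((k - i) choose card (interior_pts S F C)) * ((-1)^(card C - i) * int (card C choose i)))
      = partial_alt_binom (card ?E) (card (C - ?E)) k"
    using sum_alt_binom_product by simp
  also have "\<dots> = (\<Sum>A | ?E \<subseteq> A \<and> A \<subseteq> C. truncated_sign_sum k A)"
    using \<open>finite C\<close> by (simp add: sum_truncated_sign_sum_interval)
  finally show ?thesis by (simp add: conv_closure_fibre[OF C])
qed

lemma alternating_a_count_sum:
  assumes n: "card S = n"
  shows "(\<Sum>i=0..k. \<Sum>j=0..k-i. (-1::int)^j * int ((k-i) choose j) *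
              (\<Sum>s=i..n. (-1)^(s-i) * int (s choose i) * int (a_count S F s j)))
       = (if n \<le> k then 1 else 0)"
proof -
  have finite_convex: "finite {C. convex_set S F C}"
    using finite_ground by (auto simp: convex_set_def intro: finite_subset[of _ "Pow S"])
  have closure_convex: "conv_closure S F ` Pow S \<subseteq> {C. convex_set S F C}"
    using convex_conv_closure by auto
  have "(\<Sum>i=0..k. \<Sum>j=0..k-i. (-1::int)^j * int ((k-i) choose j) *
              (\<Sum>s=i..n. (-1)^(s-i) * int (s choose i) * int (a_count S F s j)))
      = (\<Sum>C | convex_set S F C. \<Sum>A | A \<in> Pow S \<and> conv_closure S F A = C. truncated_sign_sum k A)"
    unfolding alternating_a_count_sum_eq_sum_convex[OF n]
    by (intro sum.cong refl) (simp add: convex_weight_eq_sum_fibre)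
  also have "\<dots> = (\<Sum>A\<in>Pow S. truncated_sign_sum k A)"
    using finite_ground finite_convex closure_convex by (intro sum.group) auto
  also have "\<dots> = partial_alt_binom 0 n k"
    using sum_truncated_sign_sum_interval[OF finite_ground, of "{}" k] n by (simp add: Pow_def)
  finally show ?thesis by (simp add: partial_alt_binom_0)
qed

end

theorem corollary4p4:
  fixes S :: "'a set" and F :: "'a set set" and n :: nat
  assumes "antimatroid S F" and "card S = n"
  shows "(\<forall>k::nat. k < n \<longrightarrow>
           (\<Sum>i=0..k. \<Sum>j=0..k-i. (-1::int)^j * int ((k-i) choose j) *
              (\<Sum>s=i..n. (-1)^(s-i) * int (s choose i) * int (a_count S F s j))) = 0)
       \<and> (\<Sum>i=0..n. \<Sum>j=0..n-i. (-1::int)^j * int ((n-i) choose j) *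
              (\<Sum>s=i..n. (-1)^(s-i) * int (s choose i) * int (a_count S F s j))) = 1"
  using alternating_a_count_sum[OF assms] by simp

end
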